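(* Let $V$ be a finite set with $|V|=n$, let $h:2^V\to\mathbb{R}_{\ge0}$ be a non-negative submodular function, and let $a\in\mathbb{R}^V$ with $\max_{i\in V}a_i>0$. Let $f(\delta):=\min_{S\subseteq V}\big(h(S)-\delta a(S)\big)$ and $\delta^*:=\max\{\delta: f(\delta)\ge0\}$ (the largest root of $f$). Run the look-ahead Newton–Dinkelbach method on $f$, initialized as described in the context. Then it returns $\delta^*$, and the number $\ell$ of iterates $\delta^{(1)}>\delta^{(2)}>\dots>\delta^{(\ell)}=\delta^*$ it produces satisfies $\ell\le 2n^2+2n+4$.
   Context: $a(S):=\sum_{i\in S}a_i$, $h_\delta(S):=h(S)-\delta a(S)$. A submodular function minimization oracle returns, for any $\delta$, some $S\in\operatorname{argmin}_{T\subseteq V}h_\delta(T)$; then $f(\delta)=h_\delta(S)$ and $-a(S)$ is a supergradient of $f$ at $\delta$ (an element of $\{g: f(x)\le f(\delta)+g(x-\delta)\ \forall x\}$). Initialization: $\delta^{(1)}:=\min\{h(\{i\})/a_i: i\in V, a_i>0\}$; if $f(\delta^{(1)})=0$ return $\delta^{(1)}$ (so $\ell=1$); otherwise $g^{(1)}:=-a(S^{(1)})$ for the set $S^{(1)}$ returned by the oracle at $\delta^{(1)}$ (then $g^{(1)}<0$). Look-ahead Newton–Dinkelbach method: for $i=1,2,\dots$: if $f(\delta^{(i)})=0$ return $\delta^{(i)}$; else $\delta:=\delta^{(i)}-f(\delta^{(i)})/g^{(i)}$ with supergradient $g$ from the oracle, return NO ROOT if $f(\delta)=-\infty$ or ($f(\delta)<0$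 and $g\ge0$); let $\delta':=2\delta-\delta^{(i)}$ with supergradient $g'$; if $-\infty<f(\delta')<0$ and $g'<0$ replace $(\delta,g)$ by $(\delta',g')$; set $\delta^{(i+1)}:=\delta$, $g^{(i+1)}:=g$. *)

theory Defs
  imports Main "HOL-Library.Infinite_Set" Complex_Main
begin

definition asum :: "('a \<Rightarrow> real) \<Rightarrow> 'a set \<Rightarrow> real" where
  "asum a S = (\<Sum>i\<in>S. a i)"

definition submodular_on :: "'a set \<Rightarrow> ('a set \<Rightarrow> real) \<Rightarrow> bool" where
  "submodular_on V h \<longleftrightarrow>
     (\<forall>S T. S \<subseteq> V \<longrightarrow> T \<subseteq> V \<longrightarrow> h (S \<union> T) + h (S \<inter> T) \<le> h S + h T)"

definition hdelta :: "('a set \<Rightarrow> real) \<Rightarrow> ('a \<Rightarrow> real) \<Rightarrow> real \<Rightarrow> 'a set \<Rightarrow> real" where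
  "hdelta h a d S = h S - d * asum a S"

definition fval :: "'a set \<Rightarrow> ('a set \<Rightarrow> real) \<Rightarrow> ('a \<Rightarrow> real) \<Rightarrow> real \<Rightarrow> real" where
  "fval V h a d = Min (hdelta h a d ` Pow V)"

definition delta_star :: "'a set \<Rightarrow> ('a set \<Rightarrow> real) \<Rightarrow> ('a \<Rightarrow> real) \<Rightarrow> real" where
  "delta_star V h a = (GREATEST d. fval V h a d \<ge> 0)"

definition sfm_oracle :: "'a set \<Rightarrow> ('a set \<Rightarrow> real) \<Rightarrow> ('a \<Rightarrow> real) \<Rightarrow> (real \<Rightarrow> 'a set) \<Rightarrow> bool" where
  "sfm_oracle V h a orc \<longleftrightarrow>
     (\<forall>d. orc d \<subseteq> V \<and> (\<forall>T. T \<subseteq> V \<longrightarrow> hdelta h a d (orc d) \<le> hdelta h a d T))"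

definition sgrad :: "('a \<Rightarrow> real) \<Rightarrow> (real \<Rightarrow> 'a set) \<Rightarrow> real \<Rightarrow> real" where
  "sgrad a orc d = - asum a (orc d)"

text \<open>State of the method: current iterate with its supergradient, returned root, or NO ROOT.\<close>
datatype ln_state = Run real real | Done real | NoRoot

text \<open>One iteration of the look-ahead Newton-Dinkelbach method.  Since f is a minimum over a
  finite nonempty family it is never -infinity, so those tests are vacuous.\<close>
definition ln_step :: "'a set \<Rightarrow> ('a set \<Rightarrow> real) \<Rightarrow> ('a \<Rightarrow> real) \<Rightarrow> (real \<Rightarrow> 'a set)
    \<Rightarrow> ln_state \<Rightarrow> ln_state" where
  "ln_step V h a orc st = (case st of
     Run d g \<Rightarrow>
       (if fval V h a d = 0 then Done d
        else
          let dn = d - fval V h a d / g; gn = sgrad a orc dn in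
          if fval V h a dn < 0 \<and> gn \<ge> 0 then NoRoot
          else
            let dp = 2 * dn - d; gp = sgrad a orc dp in
            if fval V h a dp < 0 \<and> gp < 0 then Run dp gp else Run dn gn)
   | Done d \<Rightarrow> Done d
   | NoRoot \<Rightarrow> NoRoot)"

definition delta_init :: "'a set \<Rightarrow> ('a set \<Rightarrow> real) \<Rightarrow> ('a \<Rightarrow> real) \<Rightarrow> real" where
  "delta_init V h a = Min ((\<lambda>i. h {i} / a i) ` {i \<in> V. a i > 0})"

text \<open>State after k iterations (k = 0: initialised state with delta^(1), g^(1)).
  If f(delta^(1)) = 0 the first step returns delta^(1), matching the initialisation rule.\<close>
definition ln_run :: "'a set \<Rightarrow> ('a set \<Rightarrow> real) \<Rightarrow> ('a \<Rightarrow> real) \<Rightarrow> (real \<Rightarrow> 'a set)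
    \<Rightarrow> nat \<Rightarrow> ln_state" where
  "ln_run V h a orc k =
     (ln_step V h a orc ^^ k) (Run (delta_init V h a) (sgrad a orc (delta_init V h a)))"

fun iterate_of :: "ln_state \<Rightarrow> real" where
  "iterate_of (Run d g) = d"
| "iterate_of (Done d) = d"
| "iterate_of NoRoot = 0"

end

theory Submission
  imports Defs
begin

(*
  Write d* = min {h(S)/a(S) : S <= V, a(S) > 0}. This minimum is the largest root of f, and
  g = h_{d*} is non-negative and submodular. From an iterate d > d* whose oracle answer is S, the
  Newton step lands at d* + g(S)/a(S). Comparing the oracle answers at consecutive iterates shows
  that the gap g of the returned set at least halves every two iterations: a successful look-ahead
  step more than halves a(S), and if the look-ahead from the new iterate is rejected, the Newton
  offset g(S)/a(S) has halved while a(S) has not grown. So every fourth returned set has at most a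
  quarter of the gap of the previous one.

  Such chains are short. If g(T_(j+1)) <= g(T_j)/4, every member of the set lattice generated by
  T_(j+1), ..., T_(q-1) has g-value at most 2 g(T_(j+1)) < g(T_j), so T_j lies outside it. Adding
  a set outside the lattice raises the potential 2 (number of signature classes) + (number of
  incomparable pairs of classes) by at least 2, and the potential never exceeds n^2 + n + 4.
  Hence q <= (n^2 + n + 2)/2, and the method stops after at most 2 n^2 + 2 n + 4 iterates.
*)

section \<open>Geometrically decreasing chains of a submodular function\<close>

definition signature :: "'a set set \<Rightarrow> 'a \<Rightarrow> 'a set set" where
  "signature F v = {S \<in> F. v \<in> S}"

(* For nonempty F these are exactly the unions of intersections of nonempty subfamilies of F,
   i.e. the lattice of subsets of V generated by F, described through the signatures of points. *)
definition in_generated_lattice :: "'a set \<Rightarrow> 'a set set \<Rightarrow> 'a set \<Rightarrow> bool" where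
  "in_generated_lattice V F R \<longleftrightarrow> R \<subseteq> V
     \<and> (\<forall>u\<in>R. \<forall>v\<in>V. signature F u \<subseteq> signature F v \<longrightarrow> v \<in> R)
     \<and> (\<forall>v\<in>V. signature F v = F \<longrightarrow> v \<in> R)
     \<and> (\<forall>u\<in>R. signature F u \<noteq> {})"

definition up_closure :: "'a set \<Rightarrow> 'a set set \<Rightarrow> 'a set \<Rightarrow> 'a set" where
  "up_closure V F P = {v \<in> V. signature F v = F \<or> (\<exists>u\<in>P. signature F u \<subseteq> signature F v)}"

lemma signature_subset: "signature F v \<subseteq> F"
  unfolding signature_def by auto

lemma signature_insert:
  "signature (insert T F) v = (if v \<in> T then insert T (signature F v) else signature F v)"
  unfolding signature_def by auto

lemma in_generated_lattice_member: "T \<in> F \<Longrightarrow> T \<subseteq> V \<Longrightarrow> in_generated_lattice V F T"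
  unfolding in_generated_lattice_def signature_def by blast

lemma in_generated_lattice_empty_family: "in_generated_lattice V {} R \<Longrightarrow> V = {}"
  unfolding in_generated_lattice_def signature_def by auto

lemma up_closure_eq_ground_set:
  assumes "u \<in> P" and "signature F u = {}"
  shows "up_closure V F P = V"
  using assms unfolding up_closure_def by auto

lemma in_generated_lattice_up_closure:
  assumes "F \<noteq> {}" and "\<And>u. u \<in> P \<Longrightarrow> signature F u \<noteq> {}"
  shows "in_generated_lattice V F (up_closure V F P)"
  unfolding in_generated_lattice_def
proof (intro conjI ballI impI)
  fix u v assume u: "u \<in> up_closure V F P" and v: "v \<in> V"
    and uv: "signature F u \<subseteq> signature F v"
  from u consider "signature F u = F" | w where "w \<in> P" "signature F w \<subseteq> signature F u"
    unfolding up_closure_def by blast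
  then show "v \<in> up_closure V F P"
  proof cases
    case 1
    then have "signature F v = F" using uv signature_subset[of F v] by blast
    then show ?thesis using v unfolding up_closure_def by blast
  next
    case 2
    then show ?thesis using v uv unfolding up_closure_def by blast
  qed
next
  fix u assume "u \<in> up_closure V F P"
  then show "signature F u \<noteq> {}"
    using assms unfolding up_closure_def by blast
next
  show "up_closure V F P \<subseteq> V" unfolding up_closure_def by blast
next
  fix v assume "v \<in> V" "signature F v = F"
  then show "v \<in> up_closure V F P" unfolding up_closure_def by blast
qed

lemma submodular_on_le_add:
  assumes nonneg: "\<And>S. S \<subseteq> V \<Longrightarrow> 0 \<le> g S" and "submodular_on V g"
    and "S \<subseteq> V" and "U \<subseteq> V"
  shows "g (S \<union> U) \<le> g S + g U" and "g (S \<inter> U) \<le> g S + g U"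
proof -
  have "g (S \<union> U) + g (S \<inter> U) \<le> g S + g U"
    using assms(2-4) unfolding submodular_on_def by blast
  moreover have "0 \<le> g (S \<union> U)" and "0 \<le> g (S \<inter> U)"
    using nonneg assms(3,4) by (simp_all add: le_infI1)
  ultimately show "g (S \<union> U) \<le> g S + g U" and "g (S \<inter> U) \<le> g S + g U"
    by linarith+
qed

definition signature_classes :: "'a set \<Rightarrow> 'a set set \<Rightarrow> 'a set set set" where
  "signature_classes V F = insert F (insert {} (signature F ` V))"

definition incomparable_pairs :: "'b::order set \<Rightarrow> ('b \<times> 'b) set" where
  "incomparable_pairs X = {(A, B). A \<in> X \<and> B \<in> X \<and> \<not> A \<le> B \<and> \<not> B \<le> A}"

definition lattice_potential :: "'a set \<Rightarrow> 'a set set \<Rightarrow> nat" where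
  "lattice_potential V F =
     2 * card (signature_classes V F) + card (incomparable_pairs (signature_classes V F))"

lemma finite_signature_classes: "finite V \<Longrightarrow> finite (signature_classes V F)"
  unfolding signature_classes_def by simp

lemma finite_incomparable_pairs: "finite X \<Longrightarrow> finite (incomparable_pairs X)"
  by (rule finite_subset[of _ "X \<times> X"]) (auto simp: incomparable_pairs_def)

lemma incomparable_pairs_image:
  assumes "mono_on X p"
  shows "incomparable_pairs (p ` X)
    = map_prod p p ` {(A, B) \<in> incomparable_pairs X. \<not> p A \<le> p B \<and> \<not> p B \<le> p A}"
  using mono_onD[OF assms] unfolding incomparable_pairs_def by fastforce

lemma card_incomparable_pairs_image_le:
  assumes "finite X" and "mono_on X p"
  shows "card (incomparable_pairs (p ` X)) \<le> card (incomparable_pairs X)"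
proof -
  let ?P = "{(A, B) \<in> incomparable_pairs X. \<not> p A \<le> p B \<and> \<not> p B \<le> p A}"
  have fin: "finite (incomparable_pairs X)" using assms(1) by (rule finite_incomparable_pairs)
  have "card (incomparable_pairs (p ` X)) \<le> card ?P"
    unfolding incomparable_pairs_image[OF assms(2)] using fin
    by (intro card_image_le) (auto intro: rev_finite_subset)
  also have "\<dots> \<le> card (incomparable_pairs X)"
    using fin by (intro card_mono) auto
  finally show ?thesis .
qed

lemma card_incomparable_pairs_image_less:
  assumes "finite X" and "mono_on X p" and AB: "(A, B) \<in> incomparable_pairs X" and "p A \<le> p B"
  shows "card (incomparable_pairs (p ` X)) + 2 \<le> card (incomparable_pairs X)"
proof -
  let ?P = "{(A, B) \<in> incomparable_pairs X. \<not> p A \<le> p B \<and> \<not> p B \<le> p A}"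
  have fin: "finite (incomparable_pairs X)" using assms(1) by (rule finite_incomparable_pairs)
  have sub: "{(A, B), (B, A)} \<subseteq> incomparable_pairs X" and two: "card {(A, B), (B, A)} = 2"
    using AB by (auto simp: incomparable_pairs_def)
  have "card (incomparable_pairs (p ` X)) \<le> card ?P"
    unfolding incomparable_pairs_image[OF assms(2)] using fin
    by (intro card_image_le) (auto intro: rev_finite_subset)
  also have "\<dots> \<le> card (incomparable_pairs X - {(A, B), (B, A)})"
    using fin assms(4) by (intro card_mono) auto
  also have "\<dots> = card (incomparable_pairs X) - 2"
    using card_Diff_subset[OF finite_subset[OF sub fin] sub] two by simp
  finally show ?thesis using card_mono[OF fin sub] two by linarith
qed

lemma signature_classes_remove:
  assumes "T \<notin> F"
  shows "(\<lambda>A. A - {T}) ` signature_classes V (insert T F) = signature_classes V F"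
proof -
  have "signature (insert T F) v - {T} = signature F v" for v
    using assms by (auto simp: signature_def)
  then show ?thesis
    using assms unfolding signature_classes_def by (simp add: image_image)
qed

lemma incomparable_signature_classes_insert:
  assumes "T \<subseteq> V" and "T \<notin> F" and "\<not> in_generated_lattice V F T"
    and inj: "inj_on (\<lambda>A. A - {T}) (signature_classes V (insert T F))"
  obtains A B where "(A, B) \<in> incomparable_pairs (signature_classes V (insert T F))"
    and "A - {T} \<subseteq> B - {T}"
proof -
  let ?F' = "insert T F" and ?p = "\<lambda>A. A - {T}"
  have classes: "?F' \<in> signature_classes V ?F'" "{} \<in> signature_classes V ?F'"
    "\<And>v. v \<in> V \<Longrightarrow> signature ?F' v \<in> signature_classes V ?F'"
    unfolding signature_classes_def by auto
  have p_signature: "?p (signature ?F' v) = signature F v" for v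
    using assms(2) by (auto simp: signature_def)
  have no_meet: "signature F v \<noteq> F" if "v \<in> V" "v \<notin> T" for v
  proof
    assume "signature F v = F"
    then have "?p (signature ?F' v) = ?p ?F'" and "signature ?F' v \<noteq> ?F'"
      using p_signature assms(2) that(2) by (auto simp: signature_insert)
    then show False using inj_onD[OF inj _ classes(3)[OF that(1)] classes(1)] by blast
  qed
  have no_outside: "signature F u \<noteq> {}" if "u \<in> T" for u
  proof
    assume "signature F u = {}"
    then have "?p (signature ?F' u) = ?p {}" and "signature ?F' u \<noteq> {}"
      using p_signature that by (auto simp: signature_insert)
    moreover have "u \<in> V" using that assms(1) by blast
    ultimately show False using inj_onD[OF inj _ classes(3) classes(2)] by blast
  qed
  obtain u v where u: "u \<in> T" and v: "v \<in> V" "v \<notin> T"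
    and uv: "signature F u \<subseteq> signature F v"
    using assms(1,3) no_meet no_outside unfolding in_generated_lattice_def by auto
  let ?A = "signature ?F' u" and ?B = "signature ?F' v"
  have A: "?A = insert T (signature F u)" and B: "?B = signature F v"
    using u v by (simp_all add: signature_insert)
  have "T \<notin> ?B" using B assms(2) signature_subset[of F v] by auto
  then have "\<not> ?A \<subseteq> ?B" using A by auto
  moreover have "\<not> ?B \<subseteq> ?A"
  proof
    assume "?B \<subseteq> ?A"
    then have "signature F u = signature F v" using A B uv \<open>T \<notin> ?B\<close> by auto
    then have "?p ?A = ?p ?B" by (simp add: p_signature)
    moreover have "u \<in> V" using u assms(1) by blast
    ultimately have "?A = ?B" using inj_onD[OF inj _ classes(3) classes(3)[OF v(1)]] by blast
    then show False using A \<open>T \<notin> ?B\<close> by auto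
  qed
  moreover have "?A \<in> signature_classes V ?F'" "?B \<in> signature_classes V ?F'"
    using classes u v assms(1) by auto
  ultimately show ?thesis
    using that[of ?A ?B] uv unfolding incomparable_pairs_def by (simp add: p_signature)
qed

lemma lattice_potential_insert:
  assumes "finite V" and "T \<subseteq> V" and "\<not> in_generated_lattice V F T"
  shows "lattice_potential V F + 2 \<le> lattice_potential V (insert T F)"
proof -
  let ?p = "\<lambda>A. A - {T}" and ?S = "signature_classes V (insert T F)"
  have "T \<notin> F" using assms(2,3) in_generated_lattice_member by blast
  then have image: "?p ` ?S = signature_classes V F" by (rule signature_classes_remove)
  have fin: "finite ?S" using assms(1) by (rule finite_signature_classes)
  have mono: "mono_on ?S ?p" by (auto intro: mono_onI)
  show ?thesis
  proof (cases "inj_on ?p ?S")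
    case True
    then obtain A B where "(A, B) \<in> incomparable_pairs ?S" and "?p A \<subseteq> ?p B"
      using incomparable_signature_classes_insert assms(2,3) \<open>T \<notin> F\<close> by blast
    then have "card (incomparable_pairs (signature_classes V F)) + 2 \<le> card (incomparable_pairs ?S)"
      using card_incomparable_pairs_image_less[OF fin mono] image by fastforce
    moreover have "card (signature_classes V F) = card ?S"
      using card_image[OF True] image by simp
    ultimately show ?thesis unfolding lattice_potential_def by linarith
  next
    case False
    then have "card (signature_classes V F) < card ?S"
      using image card_image_le[OF fin, of ?p] inj_on_iff_eq_card[OF fin] by fastforce
    moreover have "card (incomparable_pairs (signature_classes V F)) \<le> card (incomparable_pairs ?S)"
      using card_incomparable_pairs_image_le[OF fin mono] image by simp
    ultimately show ?thesis unfolding lattice_potential_def by linarith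
  qed
qed

lemma lattice_potential_empty: "lattice_potential V {} = 2"
proof -
  have classes: "signature_classes V {} = {{}}"
    unfolding signature_classes_def signature_def by auto
  have "incomparable_pairs {{} :: 'a set set} = {}" unfolding incomparable_pairs_def by auto
  then show ?thesis unfolding lattice_potential_def classes by simp
qed

lemma lattice_potential_le:
  assumes "finite V"
  shows "lattice_potential V F \<le> card V ^ 2 + card V + 4"
proof -
  define C where "C = signature F ` V - {F, {}}"
  define m where "m = card C"
  have fin: "finite C" using assms unfolding C_def by simp
  have "m \<le> card (signature F ` V)" unfolding m_def C_def using assms by (simp add: card_mono)
  also have "\<dots> \<le> card V" using assms by (rule card_image_le)
  finally have m: "m \<le> card V" .
  have classes: "signature_classes V F = insert F (insert {} C)"
    unfolding signature_classes_def C_def by auto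
  have "card (signature_classes V F) \<le> m + 2"
    unfolding classes m_def using card_insert_le_m1 fin
    by (metis add_2_eq_Suc' card_insert_if finite_insert le_SucI le_refl)
  moreover have "incomparable_pairs (signature_classes V F) \<subseteq> C \<times> C - (\<lambda>A. (A, A)) ` C"
  proof
    fix P assume P: "P \<in> incomparable_pairs (signature_classes V F)"
    then obtain A B where AB: "P = (A, B)" "A \<in> signature_classes V F" "B \<in> signature_classes V F"
      "\<not> A \<subseteq> B" "\<not> B \<subseteq> A"
      unfolding incomparable_pairs_def by auto
    then have "A \<subseteq> F" "B \<subseteq> F"
      unfolding signature_classes_def signature_def by auto
    with AB show "P \<in> C \<times> C - (\<lambda>A. (A, A)) ` C" unfolding classes by auto
  qed
  then have "card (incomparable_pairs (signature_classes V F)) \<le> card (C \<times> C - (\<lambda>A. (A, A)) ` C)"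
    using fin by (intro card_mono) auto
  moreover have "card (C \<times> C - (\<lambda>A. (A, A)) ` C) = m * m - m"
    using fin
    by (subst card_Diff_subset) (auto simp: card_image inj_on_def card_cartesian_product m_def)
  ultimately have "lattice_potential V F \<le> 2 * (m + 2) + (m * m - m)"
    unfolding lattice_potential_def by (intro add_mono) auto
  also have "\<dots> = m * m + m + 4" by (simp add: algebra_simps)
  also have "\<dots> \<le> card V ^ 2 + card V + 4"
    using m by (simp add: power2_eq_square add_mono mult_le_mono)
  finally show ?thesis .
qed

lemma in_generated_lattice_singleton:
  assumes "T \<subseteq> V" and "in_generated_lattice V {T} R"
  shows "R = T"
  using assms unfolding in_generated_lattice_def by (auto simp: signature_def)

lemma in_generated_lattice_insert_inter:
  assumes R: "in_generated_lattice V (insert T F) R"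
  shows "R \<inter> T = T \<inter> up_closure V F R"
proof
  show "R \<inter> T \<subseteq> T \<inter> up_closure V F R"
    using R unfolding in_generated_lattice_def up_closure_def by blast
next
  show "T \<inter> up_closure V F R \<subseteq> R \<inter> T"
  proof
    fix v assume v: "v \<in> T \<inter> up_closure V F R"
    then have vV: "v \<in> V" and sig_v: "signature (insert T F) v = insert T (signature F v)"
      unfolding up_closure_def by (auto simp: signature_insert)
    from v have "signature F v = F \<or> (\<exists>u\<in>R. signature F u \<subseteq> signature F v)"
      unfolding up_closure_def by auto
    then have "v \<in> R"
    proof
      assume "signature F v = F"
      then show ?thesis using R vV sig_v unfolding in_generated_lattice_def by simp
    next
      assume "\<exists>u\<in>R. signature F u \<subseteq> signature F v"
      then obtain u where "u \<in> R" and "signature F u \<subseteq> signature F v" by blast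
      moreover have "signature (insert T F) u \<subseteq> insert T (signature F u)"
        by (auto simp: signature_insert)
      ultimately show ?thesis using R vV sig_v unfolding in_generated_lattice_def by blast
    qed
    then show "v \<in> R \<inter> T" using v by blast
  qed
qed

lemma up_closure_diff_subset:
  assumes R: "in_generated_lattice V (insert T F) R" and w: "w \<in> R" "w \<notin> T"
  shows "up_closure V F (R - T) \<subseteq> R"
proof
  fix v assume "v \<in> up_closure V F (R - T)"
  then have v: "v \<in> V" and "\<exists>u\<in>R - T. signature F u \<subseteq> signature F v"
    using w signature_subset[of F w] unfolding up_closure_def by auto
  then obtain u where u: "u \<in> R" "u \<notin> T" "signature F u \<subseteq> signature F v" by blast
  have "signature (insert T F) u = signature F u" using u(2) by (simp add: signature_insert)
  moreover have "signature F v \<subseteq> signature (insert T F) v" by (auto simp: signature_def)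
  ultimately have "signature (insert T F) u \<subseteq> signature (insert T F) v"
    using u(3) by (metis order_trans)
  then show "v \<in> R" using R u(1) v unfolding in_generated_lattice_def by blast
qed

lemma in_generated_lattice_insert_le:
  assumes nonneg: "\<And>S. S \<subseteq> V \<Longrightarrow> 0 \<le> g S" and sub: "submodular_on V g"
    and TV: "T \<subseteq> V" and "0 \<le> M" and bound: "\<And>X. in_generated_lattice V F X \<Longrightarrow> g X \<le> M"
    and R: "in_generated_lattice V (insert T F) R"
  shows "g R \<le> g T + 2 * M"
proof (cases "F = {}")
  case True
  then have "R = T" using in_generated_lattice_singleton[OF TV] R by simp
  then show ?thesis using \<open>0 \<le> M\<close> by simp
next
  case False
  have RV: "R \<subseteq> V" and R_union: "\<And>u. u \<in> R \<Longrightarrow> signature (insert T F) u \<noteq> {}"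
    using R unfolding in_generated_lattice_def by blast+
  define X where "X = up_closure V F R"
  have XV: "X \<subseteq> V" unfolding X_def up_closure_def by blast
  have gTX: "g (T \<inter> X) \<le> g T + M"
  proof (cases "\<exists>u\<in>R. signature F u = {}")
    case True
    then obtain u where "u \<in> R" and "signature F u = {}" by blast
    then have "X = V" unfolding X_def by (rule up_closure_eq_ground_set)
    then show ?thesis using TV \<open>0 \<le> M\<close> by (simp add: Int_absorb2)
  next
    case False
    then have "in_generated_lattice V F X"
      unfolding X_def using \<open>F \<noteq> {}\<close> by (intro in_generated_lattice_up_closure) auto
    then have "g X \<le> M" by (rule bound)
    then show ?thesis using submodular_on_le_add(2)[OF nonneg sub TV XV] by linarith
  qed
  have R_inter_T: "R \<inter> T = T \<inter> X"
    unfolding X_def using R by (rule in_generated_lattice_insert_inter)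
  show ?thesis
  proof (cases "R \<subseteq> T")
    case True
    then show ?thesis using R_inter_T gTX \<open>0 \<le> M\<close> by (simp add: Int_absorb2)
  next
    case False
    then obtain w where w: "w \<in> R" "w \<notin> T" by blast
    define Y where "Y = up_closure V F (R - T)"
    have YV: "Y \<subseteq> V" unfolding Y_def up_closure_def by blast
    have "Y \<subseteq> R" unfolding Y_def using R w by (rule up_closure_diff_subset)
    moreover have "R - T \<subseteq> Y" using RV unfolding Y_def up_closure_def by blast
    ultimately have R_split: "R = (T \<inter> X) \<union> Y" using R_inter_T by blast
    have "T \<inter> X \<subseteq> V" using TV by blast
    then have "g R \<le> g (T \<inter> X) + g Y"
      using submodular_on_le_add(1)[OF nonneg sub _ YV] R_split by simp
    moreover have "signature F u \<noteq> {}" if "u \<in> R - T" for u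
      using R_union[of u] that by (simp add: signature_insert)
    then have "in_generated_lattice V F Y"
      unfolding Y_def using \<open>F \<noteq> {}\<close> by (intro in_generated_lattice_up_closure) auto
    then have "g Y \<le> M" by (rule bound)
    ultimately show ?thesis using gTX by linarith
  qed
qed

lemma image_atLeastLessThan_eq_insert:
  "i < q \<Longrightarrow> T ` {i..<q} = insert (T i) (T ` {Suc i..<q})"
  by (simp add: atLeastLessThan_eq_atLeastAtMost_diff Icc_eq_insert_lb_nat) auto

lemma lattice_avoiding_sequence_length_le:
  assumes "finite V" and TV: "\<And>j. j < q \<Longrightarrow> T j \<subseteq> V"
    and avoid: "\<And>j. j < q \<Longrightarrow> \<not> in_generated_lattice V (T ` {Suc j..<q}) (T j)"
  shows "2 * q \<le> card V ^ 2 + card V + 2"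
proof -
  have potential: "2 + 2 * (q - i) \<le> lattice_potential V (T ` {i..<q})" if "i \<le> q" for i
    using that
  proof (induction i rule: inc_induct)
    case base
    then show ?case by (simp add: lattice_potential_empty)
  next
    case (step i)
    have "lattice_potential V (T ` {Suc i..<q}) + 2 \<le> lattice_potential V (T ` {i..<q})"
      using lattice_potential_insert[OF \<open>finite V\<close> TV avoid] step.hyps
      by (simp add: image_atLeastLessThan_eq_insert)
    then show ?case using step.IH step.hyps by linarith
  qed
  have "2 + 2 * q \<le> lattice_potential V (T ` {0..<q})" using potential[of 0] by simp
  also have "\<dots> \<le> card V ^ 2 + card V + 4" using \<open>finite V\<close> by (rule lattice_potential_le)
  finally show ?thesis by simp
qed

lemma quartering_chain_length_le:
  assumes "finite V" and nonneg: "\<And>S. S \<subseteq> V \<Longrightarrow> 0 \<le> g S" and sub: "submodular_on V g"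
    and TV: "\<And>j. j < q \<Longrightarrow> T j \<subseteq> V"
    and quarter: "\<And>j. Suc j < q \<Longrightarrow> 0 < g (T j) \<and> 4 * g (T (Suc j)) \<le> g (T j)"
  shows "2 * q \<le> card V ^ 2 + card V + 2"
proof (cases "V = {}")
  case True
  have "q \<le> 1"
  proof (rule ccontr)
    assume "\<not> q \<le> 1"
    then have "T 0 = {}" and "T 1 = {}" using TV True by auto
    then show False using quarter[of 0] \<open>\<not> q \<le> 1\<close> by simp
  qed
  then show ?thesis by simp
next
  case False
  define bound where "bound i = (if i < q then 2 * g (T i) else 0)" for i
  have bound_nonneg: "0 \<le> bound i" for i
    unfolding bound_def using nonneg TV by simp
  have lattice_bound: "g X \<le> bound i" if "i \<le> q" and "in_generated_lattice V (T ` {i..<q}) X"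
    for i X
    using that
  proof (induction i arbitrary: X rule: inc_induct)
    case base
    then show ?case using in_generated_lattice_empty_family[of V X] False by simp
  next
    case (step i)
    have "g X \<le> g (T i) + 2 * bound (Suc i)"
      using in_generated_lattice_insert_le[OF nonneg sub TV bound_nonneg step.IH] step
      by (simp add: image_atLeastLessThan_eq_insert)
    also have "\<dots> \<le> bound i"
      using quarter[of i] nonneg[OF TV[of i]] step.hyps unfolding bound_def by auto
    finally show ?case .
  qed
  have avoid: "\<not> in_generated_lattice V (T ` {Suc j..<q}) (T j)" if "j < q" for j
  proof
    assume member: "in_generated_lattice V (T ` {Suc j..<q}) (T j)"
    show False
    proof (cases "Suc j < q")
      case True
      then have "g (T j) \<le> 2 * g (T (Suc j))"
        using lattice_bound[OF _ member] unfolding bound_def by simp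
      then show False using quarter[OF True] by simp
    next
      case False
      then have "in_generated_lattice V {} (T j)" using member by simp
      then show False using in_generated_lattice_empty_family \<open>V \<noteq> {}\<close> by auto
    qed
  qed
  show ?thesis using \<open>finite V\<close> TV avoid by (rule lattice_avoiding_sequence_length_le)
qed

lemma halving_chain_length_le:
  assumes "finite V" and "\<And>S. S \<subseteq> V \<Longrightarrow> 0 \<le> g S" and "submodular_on V g"
    and SV: "\<And>k. k \<le> m \<Longrightarrow> S k \<subseteq> V"
    and halving: "\<And>k. k + 2 \<le> m \<Longrightarrow> 0 < g (S k) \<and> 2 * g (S (k + 2)) \<le> g (S k)"
  shows "m + 1 \<le> 2 * card V ^ 2 + 2 * card V + 4"
proof -
  define r where "r = m mod 4"
  define q where "q = m div 4 + 1"
  have m: "m = r + 4 * (q - 1)" unfolding r_def q_def by simp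
  have "2 * q \<le> card V ^ 2 + card V + 2"
  proof (rule quartering_chain_length_le[OF assms(1-3), where T = "\<lambda>j. S (r + 4 * j)"])
    fix j assume "j < q"
    then show "S (r + 4 * j) \<subseteq> V" using SV m by simp
  next
    fix j assume "Suc j < q"
    define k where "k = r + 4 * j"
    have "k + 2 + 2 \<le> m" using \<open>Suc j < q\<close> m unfolding k_def by linarith
    then have "0 < g (S k)" and "2 * g (S (k + 2)) \<le> g (S k)"
      and "2 * g (S (k + 2 + 2)) \<le> g (S (k + 2))"
      using halving[of k] halving[of "k + 2"] by simp_all
    then have "0 < g (S k) \<and> 4 * g (S (k + 2 + 2)) \<le> g (S k)" by linarith
    moreover have "r + 4 * Suc j = k + 2 + 2" unfolding k_def by simp
    ultimately show "0 < g (S (r + 4 * j)) \<and> 4 * g (S (r + 4 * Suc j)) \<le> g (S (r + 4 * j))"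
      unfolding k_def[symmetric] by (simp only:)
  qed
  moreover have "r < 4" and "1 \<le> q" unfolding r_def q_def by simp_all
  ultimately show ?thesis using m by linarith
qed

section \<open>The look-ahead Newton-Dinkelbach method\<close>

lemma submodular_on_hdelta:
  assumes "finite V" and "submodular_on V h"
  shows "submodular_on V (hdelta h a d)"
  unfolding submodular_on_def
proof (intro allI impI)
  fix S U assume "S \<subseteq> V" "U \<subseteq> V"
  then have "finite S" and "finite U" using assms(1) finite_subset by auto
  then have "asum a (S \<union> U) + asum a (S \<inter> U) = asum a S + asum a U"
    unfolding asum_def by (rule sum.union_inter)
  then have "d * asum a (S \<union> U) + d * asum a (S \<inter> U) = d * asum a S + d * asum a U"
    by (simp add: distrib_left[symmetric])
  moreover have "h (S \<union> U) + h (S \<inter> U) \<le> h S + h U"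
    using assms(2) \<open>S \<subseteq> V\<close> \<open>U \<subseteq> V\<close> unfolding submodular_on_def by blast
  ultimately show "hdelta h a d (S \<union> U) + hdelta h a d (S \<inter> U) \<le> hdelta h a d S + hdelta h a d U"
    unfolding hdelta_def by linarith
qed

lemma ln_run_Suc: "ln_run V h a orc (Suc k) = ln_step V h a orc (ln_run V h a orc k)"
  by (simp add: ln_run_def)

locale look_ahead_newton =
  fixes V :: "'a set" and h :: "'a set \<Rightarrow> real" and a :: "'a \<Rightarrow> real"
    and orc :: "real \<Rightarrow> 'a set"
  assumes finite_V: "finite V"
    and nonneg: "\<forall>S. S \<subseteq> V \<longrightarrow> h S \<ge> 0"
    and submodular: "submodular_on V h"
    and positive: "\<exists>i\<in>V. a i > 0"
    and sfm: "sfm_oracle V h a orc"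
begin

lemma orc_subset: "orc d \<subseteq> V"
  using sfm unfolding sfm_oracle_def by blast

lemma orc_le: "T \<subseteq> V \<Longrightarrow> hdelta h a d (orc d) \<le> hdelta h a d T"
  using sfm unfolding sfm_oracle_def by blast

lemma fval_eq: "fval V h a d = hdelta h a d (orc d)"
  unfolding fval_def by (rule Min_eqI) (use finite_V orc_le orc_subset in auto)

lemma fval_le: "T \<subseteq> V \<Longrightarrow> fval V h a d \<le> hdelta h a d T"
  unfolding fval_eq by (rule orc_le)

definition root :: real where
  "root = Min ((\<lambda>S. h S / asum a S) ` {S. S \<subseteq> V \<and> 0 < asum a S})"

lemma root_le: "S \<subseteq> V \<Longrightarrow> 0 < asum a S \<Longrightarrow> root \<le> h S / asum a S"
  unfolding root_def by (rule Min_le) (use finite_V in auto)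

lemma root_attained:
  obtains S where "S \<subseteq> V" and "0 < asum a S" and "root = h S / asum a S"
proof -
  obtain i where "i \<in> V" and "0 < a i" using positive by blast
  then have "{i} \<in> {S. S \<subseteq> V \<and> 0 < asum a S}" by (simp add: asum_def)
  then have "root \<in> (\<lambda>S. h S / asum a S) ` {S. S \<subseteq> V \<and> 0 < asum a S}"
    unfolding root_def using finite_V by (intro Min_in) auto
  then show ?thesis using that by blast
qed

lemma root_nonneg: "0 \<le> root"
proof -
  obtain S where "S \<subseteq> V" and "0 < asum a S" and "root = h S / asum a S" by (rule root_attained)
  then show ?thesis using nonneg by simp
qed

lemma hdelta_root_nonneg: "S \<subseteq> V \<Longrightarrow> 0 \<le> hdelta h a root S"
proof -
  assume S: "S \<subseteq> V"
  show ?thesis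
  proof (cases "0 < asum a S")
    case True
    then have "root * asum a S \<le> h S" using root_le[OF S] by (simp add: pos_le_divide_eq)
    then show ?thesis unfolding hdelta_def by simp
  next
    case False
    then have "root * asum a S \<le> 0" using root_nonneg by (simp add: mult_nonneg_nonpos)
    moreover have "0 \<le> h S" using nonneg S by blast
    ultimately show ?thesis unfolding hdelta_def by simp
  qed
qed

lemma fval_root: "fval V h a root = 0"
proof -
  obtain S where S: "S \<subseteq> V" "0 < asum a S" "root = h S / asum a S" by (rule root_attained)
  then have "hdelta h a root S = 0" unfolding hdelta_def by simp
  then have "fval V h a root \<le> 0" using fval_le[OF S(1), of root] by simp
  moreover have "0 \<le> fval V h a root" unfolding fval_eq using hdelta_root_nonneg orc_subset .
  ultimately show ?thesis by simp
qed

lemma fval_neg: "root < d \<Longrightarrow> fval V h a d < 0"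
proof -
  assume "root < d"
  obtain S where S: "S \<subseteq> V" "0 < asum a S" "root = h S / asum a S" by (rule root_attained)
  then have "hdelta h a d S = (root - d) * asum a S"
    unfolding hdelta_def by (simp add: algebra_simps)
  also have "\<dots> < 0" using \<open>root < d\<close> S(2) by (simp add: mult_neg_pos)
  finally show ?thesis using fval_le[OF S(1), of d] by simp
qed

lemma delta_star_eq_root: "delta_star V h a = root"
  unfolding delta_star_def
proof (rule Greatest_equality)
  show "0 \<le> fval V h a root" by (simp add: fval_root)
next
  fix d assume "0 \<le> fval V h a d"
  then show "d \<le> root" using fval_neg[of d] by linarith
qed

definition weight :: "real \<Rightarrow> real" where
  "weight x = asum a (orc x)"

definition gap :: "real \<Rightarrow> real" where
  "gap x = hdelta h a root (orc x)"

lemma sgrad_eq: "sgrad a orc x = - weight x"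
  unfolding sgrad_def weight_def ..

lemma gap_nonneg: "0 \<le> gap x"
  unfolding gap_def using hdelta_root_nonneg orc_subset .

lemma fval_eq_gap: "fval V h a x = gap x - (x - root) * weight x"
  unfolding fval_eq gap_def weight_def hdelta_def by (simp add: algebra_simps)

lemma weight_pos:
  assumes "root < x"
  shows "0 < weight x"
proof -
  have "0 < (x - root) * weight x"
    using fval_neg[OF assms] gap_nonneg[of x] unfolding fval_eq_gap by linarith
  then show ?thesis using assms by (simp add: zero_less_mult_iff)
qed

lemma weight_mono:
  assumes "y < x"
  shows "weight y \<le> weight x"
proof -
  have "hdelta h a x (orc x) \<le> hdelta h a x (orc y)"
    and "hdelta h a y (orc y) \<le> hdelta h a y (orc x)"
    using orc_le orc_subset by blast+
  then have "(x - y) * (weight y - weight x) \<le> 0"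
    unfolding hdelta_def weight_def by (simp add: algebra_simps)
  then show ?thesis using assms by (simp add: mult_le_0_iff)
qed

lemma gap_mono:
  assumes "root \<le> y" and "y < x"
  shows "gap y \<le> gap x"
proof -
  have "hdelta h a y (orc y) \<le> hdelta h a y (orc x)" using orc_le orc_subset by blast
  then have "gap y - gap x \<le> (y - root) * (weight y - weight x)"
    unfolding hdelta_def gap_def weight_def by (simp add: algebra_simps)
  also have "\<dots> \<le> 0" using assms weight_mono[OF assms(2)] by (simp add: mult_nonneg_nonpos)
  finally show ?thesis by simp
qed

definition newton :: "real \<Rightarrow> real" where
  "newton x = x - fval V h a x / sgrad a orc x"

definition next_iterate :: "real \<Rightarrow> real" where
  "next_iterate x = (let y = 2 * newton x - x in
     if fval V h a y < 0 \<and> sgrad a orc y < 0 then y else newton x)"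

lemma newton_eq: "root < x \<Longrightarrow> newton x = root + gap x / weight x"
  unfolding newton_def fval_eq_gap sgrad_eq using weight_pos[of x]
  by (simp add: field_simps)

lemma newton_ge: "root < x \<Longrightarrow> root \<le> newton x"
  using newton_eq gap_nonneg[of x] weight_pos[of x] by simp

lemma newton_less:
  assumes "root < x"
  shows "newton x < x"
proof -
  have "gap x < (x - root) * weight x" using fval_neg[OF assms] unfolding fval_eq_gap by linarith
  then have "gap x / weight x < x - root" using weight_pos[OF assms] by (simp add: divide_less_eq)
  then show ?thesis using newton_eq[OF assms] by simp
qed

lemma root_less_if_fval_neg: "root \<le> y \<Longrightarrow> fval V h a y < 0 \<Longrightarrow> root < y"
  using fval_root by (cases "y = root") auto

lemma ln_step_Run:
  assumes "root < x"
  shows "ln_step V h a orc (Run x (sgrad a orc x))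
    = Run (next_iterate x) (sgrad a orc (next_iterate x))"
proof -
  have "fval V h a x \<noteq> 0" using fval_neg[OF assms] by simp
  moreover have "\<not> (fval V h a (newton x) < 0 \<and> 0 \<le> sgrad a orc (newton x))"
  proof
    assume *: "fval V h a (newton x) < 0 \<and> 0 \<le> sgrad a orc (newton x)"
    then have "root < newton x" using root_less_if_fval_neg newton_ge[OF assms] by blast
    then show False using * weight_pos sgrad_eq by force
  qed
  ultimately show ?thesis unfolding ln_step_def next_iterate_def newton_def Let_def by simp
qed

lemma ln_step_root: "ln_step V h a orc (Run root g) = Done root"
  unfolding ln_step_def by (simp add: fval_root)

lemma next_iterate_cases:
  assumes "root < x"
  shows "next_iterate x = newton x \<and> 2 * newton x - x \<le> root
    \<or> next_iterate x = 2 * newton x - x \<and> root < next_iterate x"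
proof (cases "fval V h a (2 * newton x - x) < 0 \<and> sgrad a orc (2 * newton x - x) < 0")
  case True
  let ?y = "2 * newton x - x"
  have "0 < weight ?y" using True sgrad_eq by simp
  moreover have "h (orc ?y) - ?y * weight ?y < 0"
    using True unfolding fval_eq hdelta_def weight_def by simp
  ultimately have "h (orc ?y) / weight ?y < ?y" by (simp add: divide_less_eq)
  moreover have "root \<le> h (orc ?y) / weight ?y"
    using root_le[OF orc_subset] \<open>0 < weight ?y\<close> unfolding weight_def by blast
  moreover have "next_iterate x = ?y" using True unfolding next_iterate_def Let_def by simp
  ultimately show ?thesis by simp
next
  case False
  then have "2 * newton x - x \<le> root" using fval_neg weight_pos sgrad_eq by force
  moreover have "next_iterate x = newton x" using False unfolding next_iterate_def Let_def by auto
  ultimately show ?thesis by simp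
qed

lemma next_iterate_bounds:
  assumes "root < x"
  shows "root \<le> next_iterate x" and "next_iterate x \<le> newton x" and "next_iterate x < x"
  using next_iterate_cases[OF assms] newton_ge[OF assms] newton_less[OF assms] by auto

lemma fval_le_gap: "fval V h a x \<le> gap y - (x - root) * weight y"
  using fval_le[OF orc_subset, of x y] unfolding hdelta_def gap_def weight_def
  by (simp add: algebra_simps)

lemma gap_look_ahead_le:
  assumes x: "root < x" and y: "root < 2 * newton x - x"
  shows "2 * gap (2 * newton x - x) \<le> gap x"
proof -
  let ?y = "2 * newton x - x"
  have fy: "gap ?y < (?y - root) * weight ?y" using fval_neg[OF y] unfolding fval_eq_gap by simp
  have "(newton x - x) * weight x = gap x - (x - root) * weight x"
    using newton_eq[OF x] weight_pos[OF x] by (simp add: field_simps)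
  also have "\<dots> \<le> gap ?y - (x - root) * weight ?y" using fval_le_gap[of x ?y] unfolding fval_eq_gap .
  also have "\<dots> < (?y - x) * weight ?y" using fy by (simp add: algebra_simps)
  finally have "(newton x - x) * weight x < (newton x - x) * (2 * weight ?y)"
    by (simp add: algebra_simps)
  then have weight_halves: "2 * weight ?y < weight x"
    using newton_less[OF x] by (simp add: mult_less_cancel_left)
  have "gap ?y < (?y - root) * weight ?y" by (fact fy)
  also have "\<dots> \<le> (newton x - root) * weight ?y"
    using newton_less[OF x] weight_pos[OF y] by (simp add: mult_right_mono)
  also have "\<dots> = gap x * weight ?y / weight x" using newton_eq[OF x] by simp
  also have "\<dots> \<le> gap x / 2"
  proof -
    have "gap x * (2 * weight ?y) \<le> gap x * weight x"
      using weight_halves gap_nonneg[of x] by (intro mult_left_mono) auto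
    then show ?thesis using weight_pos[OF x] by (simp add: field_simps)
  qed
  finally show ?thesis by simp
qed

lemma gap_newton_le:
  assumes x: "root < x" and y: "root < y" "y \<le> newton x" and plain: "2 * newton y - y \<le> root"
  shows "2 * gap y \<le> gap x"
proof -
  have "y < x" using y(2) newton_less[OF x] by simp
  have "2 * (gap y / weight y) \<le> gap x / weight x"
    using plain y(2) newton_eq[OF x] newton_eq[OF y(1)] by simp
  then have "2 * gap y * weight x \<le> gap x * weight y"
    using weight_pos[OF x] weight_pos[OF y(1)] by (simp add: field_simps)
  also have "\<dots> \<le> gap x * weight x"
    using weight_mono[OF \<open>y < x\<close>] gap_nonneg by (simp add: mult_left_mono)
  finally show ?thesis using weight_pos[OF x] by simp
qed

lemma gap_next_next_le:
  assumes x: "root < x" and y: "root < next_iterate x"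
  shows "2 * gap (next_iterate (next_iterate x)) \<le> gap x"
proof -
  let ?y = "next_iterate x" and ?z = "next_iterate (next_iterate x)"
  have gap_yx: "gap ?y \<le> gap x" using gap_mono next_iterate_bounds[OF x] by simp
  have gap_zy: "gap ?z \<le> gap ?y" using gap_mono next_iterate_bounds[OF y] by simp
  from next_iterate_cases[OF y] show ?thesis
  proof
    assume "?z = newton ?y \<and> 2 * newton ?y - ?y \<le> root"
    then have "2 * gap ?y \<le> gap x"
      using gap_newton_le[OF x y] next_iterate_bounds[OF x] by simp
    then show ?thesis using gap_zy by simp
  next
    assume "?z = 2 * newton ?y - ?y \<and> root < ?z"
    then have "2 * gap ?z \<le> gap ?y" using gap_look_ahead_le[OF y] by simp
    then show ?thesis using gap_yx by simp
  qed
qed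

lemma gap_pos:
  assumes x: "root < x" and y: "root < next_iterate x"
  shows "0 < gap x"
proof (rule ccontr)
  assume "\<not> 0 < gap x"
  then have "newton x = root" using newton_eq[OF x] gap_nonneg[of x] by simp
  then show False using next_iterate_bounds(2)[OF x] y by simp
qed

definition delta_seq :: "nat \<Rightarrow> real" where
  "delta_seq k = (next_iterate ^^ k) (delta_init V h a)"

lemma delta_seq_Suc: "delta_seq (Suc k) = next_iterate (delta_seq k)"
  unfolding delta_seq_def by simp

lemma root_le_delta_init: "root \<le> delta_init V h a"
proof -
  let ?I = "(\<lambda>i. h {i} / a i) ` {i \<in> V. 0 < a i}"
  have "delta_init V h a \<in> ?I"
    unfolding delta_init_def using finite_V positive by (intro Min_in) auto
  then obtain i where "i \<in> V" "0 < a i" "delta_init V h a = h {i} / a i" by blast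
  then show ?thesis using root_le[of "{i}"] by (simp add: asum_def)
qed

lemma delta_seq_ge_root: "(\<forall>j<k. root < delta_seq j) \<Longrightarrow> root \<le> delta_seq k"
proof (cases k)
  case 0
  then show ?thesis by (simp add: delta_seq_def root_le_delta_init)
next
  case (Suc j)
  moreover assume "\<forall>j<k. root < delta_seq j"
  ultimately show ?thesis using next_iterate_bounds(1) by (simp add: delta_seq_Suc)
qed

lemma delta_seq_Suc_less: "root < delta_seq k \<Longrightarrow> delta_seq (Suc k) < delta_seq k"
  using next_iterate_bounds(3) by (simp add: delta_seq_Suc)

lemma ln_run_delta_seq:
  "(\<forall>j<k. root < delta_seq j) \<Longrightarrow> ln_run V h a orc k = Run (delta_seq k) (sgrad a orc (delta_seq k))"
proof (induction k)
  case 0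
  then show ?case by (simp add: ln_run_def delta_seq_def)
next
  case (Suc k)
  then show ?case by (simp add: ln_run_Suc ln_step_Run delta_seq_Suc)
qed

lemma delta_seq_length_le:
  assumes "\<forall>j<m. root < delta_seq j"
  shows "m + 1 \<le> 2 * card V ^ 2 + 2 * card V + 4"
proof (rule halving_chain_length_le[OF finite_V,
    where g = "hdelta h a root" and S = "\<lambda>k. orc (delta_seq k)"])
  show "0 \<le> hdelta h a root S" if "S \<subseteq> V" for S using that by (rule hdelta_root_nonneg)
  show "submodular_on V (hdelta h a root)" using finite_V submodular by (rule submodular_on_hdelta)
  show "orc (delta_seq k) \<subseteq> V" for k by (rule orc_subset)
next
  fix k assume "k + 2 \<le> m"
  then have "root < delta_seq k" and "root < next_iterate (delta_seq k)"
    using assms by (simp_all add: delta_seq_Suc[symmetric])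
  then show "0 < hdelta h a root (orc (delta_seq k))
    \<and> 2 * hdelta h a root (orc (delta_seq (k + 2))) \<le> hdelta h a root (orc (delta_seq k))"
    using gap_pos gap_next_next_le unfolding gap_def by (simp add: delta_seq_Suc numeral_2_eq_2)
qed

lemma delta_seq_reaches_root:
  obtains L where "delta_seq L = root" and "\<forall>j<L. root < delta_seq j"
    and "L + 1 \<le> 2 * card V ^ 2 + 2 * card V + 4"
proof -
  have "\<exists>L. \<not> root < delta_seq L"
    using delta_seq_length_le[of "2 * card V ^ 2 + 2 * card V + 4"] by auto
  then obtain L where "\<not> root < delta_seq L" and below: "\<forall>j<L. root < delta_seq j"
    using exists_least_iff[of "\<lambda>L. \<not> root < delta_seq L"] by auto
  then have "delta_seq L = root" using delta_seq_ge_root[OF below] by simp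
  then show ?thesis using that below delta_seq_length_le[OF below] by simp
qed

end

theorem mainTheorem6:
  fixes V :: "'a set" and h :: "'a set \<Rightarrow> real" and a :: "'a \<Rightarrow> real"
    and orc :: "real \<Rightarrow> 'a set" and n :: nat
  assumes "finite V" and "card V = n"
    and "\<forall>S. S \<subseteq> V \<longrightarrow> h S \<ge> 0"
    and "submodular_on V h"
    and "\<exists>i\<in>V. a i > 0"
    and "sfm_oracle V h a orc"
  shows "\<exists>l::nat. 1 \<le> l \<and> l \<le> 2 * n^2 + 2 * n + 4
     \<and> (\<forall>k<l. \<exists>d g. ln_run V h a orc k = Run d g)
     \<and> (\<forall>k. k + 1 < l \<longrightarrow> iterate_of (ln_run V h a orc (k + 1)) < iterate_of (ln_run V h a orc k))
     \<and> iterate_of (ln_run V h a orc (l - 1)) = delta_star V h a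
     \<and> ln_run V h a orc l = Done (delta_star V h a)"
proof -
  interpret look_ahead_newton V h a orc
    using assms(1,3-6) by unfold_locales
  obtain L where L: "delta_seq L = root" and below: "\<forall>j<L. root < delta_seq j"
    and length: "L + 1 \<le> 2 * n ^ 2 + 2 * n + 4"
    using delta_seq_reaches_root assms(2) by blast
  have run: "ln_run V h a orc k = Run (delta_seq k) (sgrad a orc (delta_seq k))" if "k \<le> L" for k
    using ln_run_delta_seq below that by simp
  show ?thesis
  proof (intro exI[of _ "Suc L"] conjI allI impI)
    show "Suc L \<le> 2 * n ^ 2 + 2 * n + 4" using length by simp
    show "\<exists>d g. ln_run V h a orc k = Run d g" if "k < Suc L" for k
      using run that by simp
    show "iterate_of (ln_run V h a orc (k + 1)) < iterate_of (ln_run V h a orc k)"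
      if "k + 1 < Suc L" for k
      using that run[of k] run[of "k + 1"] delta_seq_Suc_less below by simp
    show "iterate_of (ln_run V h a orc (Suc L - 1)) = delta_star V h a"
      using run[of L] L delta_star_eq_root by simp
    show "ln_run V h a orc (Suc L) = Done (delta_star V h a)"
      using run[of L] L delta_star_eq_root by (simp add: ln_run_Suc ln_step_root)
  qed simp
qed

end
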